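(* Let $X=\{x_0,\ldots,x_m\}$, $\tilde X=\{\tilde x_1,\ldots,\tilde x_q\}$ (commuting), $d\in\mathbb{R}^p[[\tilde X]]$, $c\in\mathbb{R}^q\langle\langle X\rangle\rangle$ proper, and $e\in\mathbb{R}^m\langle\langle X\rangle\rangle$. Then $d\circ(c\,\tilde\circ\,\delta_e)=(d\circ c)\,\tilde\circ\,\delta_e$, where $\circ$ is the Wiener-Fliess composition product and $\tilde\circ$ the multiplicative mixed composition product.
   Context: $\mathbb{R}^\ell\langle\langle X\rangle\rangle$: formal power series in noncommuting letters of $X$ with coefficients in $\mathbb{R}^\ell$; proper means $(c,\emptyset)=0$; $c_i$ is the $i$-th component; products of vector-valued series are componentwise. $\mathbb{R}^p[[\tilde X]]$: formal power series in commuting letters with coefficients in $\mathbb{R}^p$. Shuffle product $\sqcup\!\sqcup$: bilinear, $(x_i\eta)\sqcup\!\sqcup(x_j\xi)=x_i(\eta\sqcup\!\sqcup x_j\xi)+x_j(x_i\eta\sqcup\!\sqcup\xi)$, $\eta\sqcup\!\sqcup\emptyset=\emptyset\sqcup\!\sqcup\eta=\eta$. Wiener-Fliess composition (for proper $c$): $d\circ c=\sum_{\tilde\eta\in\tilde X^\ast}(d,\tilde\eta)c^{\sqcup\!\sqcup\tilde\eta}$ with $c^{\sqcup\!\sqcup\emptyset}=1$, $c^{\sqcup\!\sqcup\tilde x_i\tilde\eta}=c_i\sqcup\!\sqcup c^{\sqcup\!\sqcup\tilde\eta}$. Multiplicative mixed composition of $c\in\mathbb{R}^r\langle\langle X\rangle\rangle$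 and $e\in\mathbb{R}^m\langle\langle X\rangle\rangle$: $c\,\tilde\circ\,\delta_e=\sum_{\eta\in X^\ast}(c,\eta)\bar\phi_e(\eta)(\mathbf 1)$, where $\mathbf 1=1\emptyset$ and $\bar\phi_e$ is the homomorphism from words (concatenation) to linear endomorphisms of $\mathbb{R}\langle\langle X\rangle\rangle$ (composition) with $\bar\phi_e(x_0)(w)=x_0w$, $\bar\phi_e(x_i)(w)=x_i(e_i\sqcup\!\sqcup w)$, $i\ge1$. *)

theory Defs
  imports "HOL-Analysis.Analysis" "HOL-Library.Multiset"
begin

text \<open>Letters of X are natural numbers (x_i is represented by i; x_0 by 0). A real formal power series in noncommuting
  letters is a coefficient function on words; a vector-valued series is a
  family of such series indexed by the component number (components 1..l).\<close>

type_synonym series = "nat list \<Rightarrow> real"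

definition one_ser :: series where
  "one_ser = (\<lambda>w. if w = [] then 1 else 0)"

definition prepend :: "nat \<Rightarrow> series \<Rightarrow> series" where
  "prepend a W = (\<lambda>w. case w of [] \<Rightarrow> 0 | b # w' \<Rightarrow> (if b = a then W w' else 0))"

fun wshuf :: "nat list \<Rightarrow> nat list \<Rightarrow> series" where
  "wshuf [] v = (\<lambda>w. if w = v then 1 else 0)"
| "wshuf (a # u) [] = (\<lambda>w. if w = a # u then 1 else 0)"
| "wshuf (a # u) (b # v) =
     (\<lambda>w. prepend a (wshuf u (b # v)) w + prepend b (wshuf (a # u) v) w)"

text \<open>Shuffle product of series (bilinear extension; every coefficient is a
  finite sum).\<close>
definition shuffle :: "series \<Rightarrow> series \<Rightarrow> series" where
  "shuffle c d = (\<lambda>w. \<Sum>\<^sub>\<infinity>(u, v) \<in> UNIV. c u * d v * wshuf u v w)"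

text \<open>Commutative monomials in x~_1..x~_q are multisets of indices.
  Shuffle power  c^{sh M}: c^{sh empty} = 1, c^{sh x~_i M} = c_i sh c^{sh M}.\<close>
definition shpow :: "(nat \<Rightarrow> series) \<Rightarrow> nat multiset \<Rightarrow> series" where
  "shpow c M = foldr (\<lambda>i acc. shuffle (c i) acc) (sorted_list_of_multiset M) one_ser"

text \<open>Wiener-Fliess composition  d o c, with d in R^p[[X~]] (d k M = coefficient
  of the k-th component at monomial M) and c in R^q<<X>>.\<close>
definition wf_comp :: "nat \<Rightarrow> (nat \<Rightarrow> nat multiset \<Rightarrow> real) \<Rightarrow> (nat \<Rightarrow> series) \<Rightarrow> (nat \<Rightarrow> series)" where
  "wf_comp q d c = (\<lambda>k w. \<Sum>\<^sub>\<infinity>M \<in> {M. set_mset M \<subseteq> {1..q}}. d k M * shpow c M w)"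

fun phi :: "(nat \<Rightarrow> series) \<Rightarrow> nat list \<Rightarrow> series \<Rightarrow> series" where
  "phi e [] W = W"
| "phi e (i # eta) W =
     (if i = 0 then prepend 0 (phi e eta W) else prepend i (shuffle (e i) (phi e eta W)))"

definition mixed_comp :: "nat \<Rightarrow> (nat \<Rightarrow> series) \<Rightarrow> (nat \<Rightarrow> series) \<Rightarrow> (nat \<Rightarrow> series)" where
  "mixed_comp m c e = (\<lambda>k w. \<Sum>\<^sub>\<infinity>eta \<in> lists {0..m}. c k eta * phi e eta one_ser w)"

end

(*
  The map  s |-> s ~o delta_e  is linear, and its left derivatives are
    x_0^{-1} (s ~o delta_e) = (x_0^{-1} s) ~o delta_e,
    x_i^{-1} (s ~o delta_e) = e_i sh ((x_i^{-1} s) ~o delta_e)   (1 <= i <= m).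
  Since x_a^{-1} obeys the Leibniz rule for the shuffle product, induction on the length of
  words shows that s |-> s ~o delta_e is a shuffle-algebra homomorphism. It therefore commutes
  with shuffle powers, hence with the Wiener-Fliess composition d o c, a linear combination of
  shuffle powers of c. Every coefficient involved is a finite sum, because the shuffle power
  c^{sh M} of a proper c and the series phi_e(eta)(1) vanish on words shorter than |M|
  and |eta| respectively.
*)
theory Submission
  imports Defs
begin

lemma infsum_finite_support:
  fixes f :: "'a \<Rightarrow> 'b::{comm_monoid_add, t2_space}"
  assumes "finite S" "S \<subseteq> A" "\<And>x. x \<in> A - S \<Longrightarrow> f x = 0"
  shows "infsum f A = sum f S"
proof -
  have "infsum f A = infsum f S"
    by (rule infsum_cong_neutral) (use assms in auto)
  with assms(1) show ?thesis
    by simp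
qed

lemma summable_on_finite_support:
  fixes f :: "'a \<Rightarrow> 'b::{comm_monoid_add, topological_space}"
  assumes "finite S" "\<And>x. x \<in> A - S \<Longrightarrow> f x = 0"
  shows "f summable_on A"
  using summable_on_cong_neutral[of "A \<inter> S" A f f] assms by auto

lemma has_sum_reindex_support:
  assumes "inj h" "\<And>x. x \<notin> range h \<Longrightarrow> f x = 0"
  shows "(f has_sum s) UNIV \<longleftrightarrow> ((f \<circ> h) has_sum s) UNIV"
  using has_sum_cong_neutral[of "range h" UNIV f f s] has_sum_reindex[of h UNIV f s] assms
  by auto

section \<open>Shuffle product\<close>

definition lderiv :: "nat \<Rightarrow> series \<Rightarrow> series" where
  "lderiv a s = (\<lambda>w. s (a # w))"

lemma prepend_Nil [simp]: "prepend a W [] = 0"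
  by (simp add: prepend_def)

lemma prepend_Cons [simp]: "prepend a W (b # w) = (if b = a then W w else 0)"
  by (simp add: prepend_def)

lemma wshuf_Nil_right [simp]: "wshuf u [] = (\<lambda>w. if w = u then 1 else 0)"
  by (cases u) auto

lemma wshuf_at_Nil: "wshuf u v [] = (if u = [] \<and> v = [] then 1 else 0)"
  by (cases "(u, v)" rule: wshuf.cases) auto

lemma wshuf_at_Cons:
  "wshuf u v (a # w) =
     (case u of [] \<Rightarrow> 0 | b # u' \<Rightarrow> if b = a then wshuf u' v w else 0) +
     (case v of [] \<Rightarrow> 0 | b # v' \<Rightarrow> if b = a then wshuf u v' w else 0)"
  by (cases "(u, v)" rule: wshuf.cases) (auto split: list.split)

lemma wshuf_nonzero:
  "wshuf u v w \<noteq> 0 \<Longrightarrow> length u + length v = length w \<and> set u \<union> set v \<subseteq> set w"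
proof (induction w arbitrary: u v)
  case Nil
  then show ?case by (simp add: wshuf_at_Nil split: if_splits)
next
  case (Cons a w)
  have "(case u of [] \<Rightarrow> 0 | b # u' \<Rightarrow> if b = a then wshuf u' v w else 0) \<noteq> 0 \<or>
        (case v of [] \<Rightarrow> 0 | b # v' \<Rightarrow> if b = a then wshuf u v' w else 0) \<noteq> 0"
    using Cons.prems by (auto simp: wshuf_at_Cons)
  then consider u' where "u = a # u'" "wshuf u' v w \<noteq> 0" | v' where "v = a # v'" "wshuf u v' w \<noteq> 0"
    by (auto split: list.splits if_splits)
  then show ?case
    by cases (use Cons.IH in fastforce)+
qed

lemma finite_wshuf_support: "finite {(u, v). wshuf u v w \<noteq> 0}"
proof -
  let ?W = "{xs. set xs \<subseteq> set w \<and> length xs \<le> length w}"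
  have "{(u, v). wshuf u v w \<noteq> 0} \<subseteq> ?W \<times> ?W"
    using wshuf_nonzero by fastforce
  moreover have "finite ?W"
    by (rule finite_lists_length_le) simp
  ultimately show ?thesis
    by (meson finite_SigmaI finite_subset)
qed

lemma shuffle_eq_sum:
  "shuffle c d w = (\<Sum>(u, v) \<in> {(u, v). wshuf u v w \<noteq> 0}. c u * d v * wshuf u v w)"
  unfolding shuffle_def by (rule infsum_finite_support[OF finite_wshuf_support]) auto

lemma has_sum_shuffle: "((\<lambda>(u, v). c u * d v * wshuf u v w) has_sum shuffle c d w) UNIV"
proof -
  have "(\<lambda>(u, v). c u * d v * wshuf u v w) summable_on UNIV"
    by (rule summable_on_finite_support[OF finite_wshuf_support]) auto
  then show ?thesis
    unfolding shuffle_def by (rule has_sum_infsum)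
qed

lemma shuffle_Nil: "shuffle c d [] = c [] * d []"
proof -
  have "{(u, v). wshuf u v [] \<noteq> 0} = {([], [])}"
    by (auto simp: wshuf_at_Nil split: if_splits)
  then show ?thesis
    by (simp add: shuffle_eq_sum wshuf_at_Nil)
qed

lemma has_sum_shuffle_Cons_left:
  "((\<lambda>(u, v). c u * d v * (case u of [] \<Rightarrow> 0 | b # u' \<Rightarrow> if b = a then wshuf u' v w else 0))
     has_sum shuffle (lderiv a c) d w) UNIV"
proof (subst has_sum_reindex_support)
  show "inj (\<lambda>(u, v). (a # u, v))"
    by (auto simp: inj_def)
qed (use has_sum_shuffle in \<open>auto simp: lderiv_def comp_def case_prod_unfold image_iff split: list.split\<close>)

lemma has_sum_shuffle_Cons_right:
  "((\<lambda>(u, v). c u * d v * (case v of [] \<Rightarrow> 0 | b # v' \<Rightarrow> if b = a then wshuf u v' w else 0))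
     has_sum shuffle c (lderiv a d) w) UNIV"
proof (subst has_sum_reindex_support)
  show "inj (\<lambda>(u, v). (u, a # v))"
    by (auto simp: inj_def)
qed (use has_sum_shuffle in \<open>auto simp: lderiv_def comp_def case_prod_unfold image_iff split: list.split\<close>)

lemma shuffle_Cons: "shuffle c d (a # w) = shuffle (lderiv a c) d w + shuffle c (lderiv a d) w"
proof -
  have "((\<lambda>(u, v). c u * d v * wshuf u v (a # w))
      has_sum shuffle (lderiv a c) d w + shuffle c (lderiv a d) w) UNIV"
    using has_sum_add[OF has_sum_shuffle_Cons_left has_sum_shuffle_Cons_right]
    by (simp add: wshuf_at_Cons case_prod_unfold algebra_simps)
  then show ?thesis
    unfolding shuffle_def by (rule infsumI)
qed

lemma lderiv_shuffle: "lderiv a (shuffle c d) = (\<lambda>w. shuffle (lderiv a c) d w + shuffle c (lderiv a d) w)"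
  by (simp add: lderiv_def shuffle_Cons)

lemma shuffle_cong_upto:
  assumes "\<And>v. length v \<le> length w \<Longrightarrow> c v = c' v"
    and "\<And>v. length v \<le> length w \<Longrightarrow> d v = d' v"
  shows "shuffle c d w = shuffle c' d' w"
  unfolding shuffle_eq_sum using assms wshuf_nonzero
  by (intro sum.cong) (fastforce simp: le_add1 le_add2)+

lemma shuffle_zero_left [simp]: "shuffle (\<lambda>_. 0) d w = 0"
  by (simp add: shuffle_eq_sum)

lemma shuffle_zero_right [simp]: "shuffle c (\<lambda>_. 0) w = 0"
  by (simp add: shuffle_eq_sum)

lemma shuffle_add_left: "shuffle (\<lambda>v. c1 v + c2 v) d w = shuffle c1 d w + shuffle c2 d w"
  by (simp add: shuffle_eq_sum case_prod_unfold algebra_simps sum.distrib)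

lemma shuffle_add_right: "shuffle c (\<lambda>v. d1 v + d2 v) w = shuffle c d1 w + shuffle c d2 w"
  by (simp add: shuffle_eq_sum case_prod_unfold algebra_simps sum.distrib)

lemma shuffle_sum_right:
  "shuffle c (\<lambda>v. \<Sum>j\<in>J. a j * d j v) w = (\<Sum>j\<in>J. a j * shuffle c (d j) w)"
  unfolding shuffle_eq_sum
  by (simp add: case_prod_unfold sum_distrib_left sum_distrib_right mult_ac) (rule sum.swap)

lemma shuffle_commute: "shuffle c d = shuffle d c"
proof
  show "shuffle c d w = shuffle d c w" for w
    by (induction w arbitrary: c d) (simp_all add: shuffle_Nil shuffle_Cons)
qed

lemma shuffle_assoc: "shuffle (shuffle a b) c = shuffle a (shuffle b c)"
proof
  show "shuffle (shuffle a b) c w = shuffle a (shuffle b c) w" for w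
    by (induction w arbitrary: a b c)
       (simp_all add: shuffle_Nil shuffle_Cons lderiv_shuffle shuffle_add_left shuffle_add_right)
qed

lemma shuffle_left_commute: "shuffle a (shuffle b c) = shuffle b (shuffle a c)"
  by (metis shuffle_assoc shuffle_commute)

definition vanishes_below :: "nat \<Rightarrow> series \<Rightarrow> bool" where
  "vanishes_below n s \<longleftrightarrow> (\<forall>w. length w < n \<longrightarrow> s w = 0)"

lemma vanishes_below_0 [simp]: "vanishes_below 0 s"
  by (simp add: vanishes_below_def)

lemma vanishes_below_1: "vanishes_below 1 s \<longleftrightarrow> s [] = 0"
  by (simp add: vanishes_below_def)

lemma vanishes_below_prepend: "vanishes_below n s \<Longrightarrow> vanishes_below (Suc n) (prepend a s)"
  by (auto simp: vanishes_below_def prepend_def split: list.split)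

lemma vanishes_below_lderiv: "vanishes_below n s \<Longrightarrow> vanishes_below (n - 1) (lderiv a s)"
  by (simp add: vanishes_below_def lderiv_def)

lemma vanishes_below_shuffle:
  assumes "vanishes_below n1 c" "vanishes_below n2 d"
  shows "vanishes_below (n1 + n2) (shuffle c d)"
proof -
  have "shuffle c d w = 0"
    if "vanishes_below n1 c" "vanishes_below n2 d" "length w < n1 + n2" for w c d n1 n2
    using that
  proof (induction w arbitrary: c d n1 n2)
    case Nil
    then show ?case
      by (cases n1) (auto simp: shuffle_Nil vanishes_below_def)
  next
    case (Cons a w)
    then have "shuffle (lderiv a c) d w = 0" "shuffle c (lderiv a d) w = 0"
      using Cons.IH vanishes_below_lderiv by fastforce+
    then show ?case
      by (simp add: shuffle_Cons)
  qed
  with assms show ?thesis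
    by (simp add: vanishes_below_def)
qed

section \<open>The multiplicative mixed composition operator\<close>

definition mixed_map :: "nat \<Rightarrow> (nat \<Rightarrow> series) \<Rightarrow> series \<Rightarrow> series" where
  "mixed_map m e s = (\<lambda>w. \<Sum>\<^sub>\<infinity>eta \<in> lists {0..m}. s eta * phi e eta one_ser w)"

lemma mixed_comp_eq_mixed_map: "mixed_comp m c e = (\<lambda>k. mixed_map m e (c k))"
  by (simp add: mixed_comp_def mixed_map_def)

definition words_upto :: "nat \<Rightarrow> nat \<Rightarrow> nat list set" where
  "words_upto m n = {eta \<in> lists {0..m}. length eta \<le> n}"

lemma finite_words_upto: "finite (words_upto m n)"
  by (rule finite_subset[OF _ finite_lists_length_le[of "{0..m}" n]]) (auto simp: words_upto_def)

lemma vanishes_below_phi: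
  "vanishes_below n W \<Longrightarrow> vanishes_below (length eta + n) (phi e eta W)"
proof (induction eta)
  case (Cons i eta)
  then have "vanishes_below (length eta + n) (shuffle (e i) (phi e eta W))"
    using vanishes_below_shuffle[OF vanishes_below_0] by fastforce
  with Cons show ?case
    by (simp add: vanishes_below_prepend)
qed simp

lemma one_ser_Nil [simp]: "one_ser [] = 1"
  by (simp add: one_ser_def)

lemma one_ser_Cons [simp]: "one_ser (i # w) = 0"
  by (simp add: one_ser_def)

lemma mixed_map_eq_sum:
  assumes "length w \<le> n"
  shows "mixed_map m e s w = (\<Sum>eta \<in> words_upto m n. s eta * phi e eta one_ser w)"
  unfolding mixed_map_def
proof (rule infsum_finite_support[OF finite_words_upto])
  show "words_upto m n \<subseteq> lists {0..m}"
    by (auto simp: words_upto_def)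
  show "s eta * phi e eta one_ser w = 0" if "eta \<in> lists {0..m} - words_upto m n" for eta
  proof -
    have "length w < length eta"
      using that assms by (auto simp: words_upto_def)
    then show ?thesis
      using vanishes_below_phi[where n = 0 and W = one_ser] by (simp add: vanishes_below_def)
  qed
qed

lemma mixed_map_Nil [simp]: "mixed_map m e s [] = s []"
proof -
  have "words_upto m 0 = {[]}"
    by (auto simp: words_upto_def)
  then show ?thesis
    by (simp add: mixed_map_eq_sum[of "[]" 0])
qed

lemma mixed_map_Cons_eq_sum:
  assumes "i \<le> m"
  shows "mixed_map m e s (i # w) =
    (\<Sum>eta \<in> words_upto m (length w).
       lderiv i s eta * (if i = 0 then phi e eta one_ser w else shuffle (e i) (phi e eta one_ser) w))"
proof -
  let ?n = "length w"
  have "mixed_map m e s (i # w) = (\<Sum>eta \<in> words_upto m (Suc ?n). s eta * phi e eta one_ser (i # w))"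
    by (rule mixed_map_eq_sum) simp
  also have "\<dots> = (\<Sum>eta \<in> Cons i ` words_upto m ?n. s eta * phi e eta one_ser (i # w))"
  proof (rule sum.mono_neutral_right[OF finite_words_upto])
    show "Cons i ` words_upto m ?n \<subseteq> words_upto m (Suc ?n)"
      using assms by (auto simp: words_upto_def)
    show "\<forall>eta \<in> words_upto m (Suc ?n) - Cons i ` words_upto m ?n. s eta * phi e eta one_ser (i # w) = 0"
    proof
      fix eta assume "eta \<in> words_upto m (Suc ?n) - Cons i ` words_upto m ?n"
      then show "s eta * phi e eta one_ser (i # w) = 0"
        by (cases eta) (auto simp: words_upto_def)
    qed
  qed
  also have "\<dots> = (\<Sum>eta \<in> words_upto m ?n. s (i # eta) * phi e (i # eta) one_ser (i # w))"
    by (simp add: sum.reindex)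
  finally show ?thesis
    by (auto simp: lderiv_def intro: sum.cong)
qed

lemma mixed_map_Cons_not_letter:
  assumes "m < i"
  shows "mixed_map m e s (i # w) = 0"
proof -
  have "phi e eta one_ser (i # w) = 0" if "eta \<in> words_upto m (Suc (length w))" for eta
    using that assms by (cases eta) (auto simp: words_upto_def)
  then show ?thesis
    by (simp add: mixed_map_eq_sum[of "i # w" "Suc (length w)"])
qed

lemma mixed_map_Cons:
  "mixed_map m e s (i # w) =
     (if i = 0 then mixed_map m e (lderiv 0 s) w
      else if i \<le> m then shuffle (e i) (mixed_map m e (lderiv i s)) w
      else 0)"
proof -
  consider "i = 0" | "0 < i" "i \<le> m" | "m < i"
    by linarith
  then show ?thesis
  proof cases
    case 1
    then show ?thesis
      using mixed_map_Cons_eq_sum[of 0 m e s w] mixed_map_eq_sum[OF order_refl, where s = "lderiv 0 s"]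
      by simp
  next
    case 2
    let ?n = "length w"
    have "mixed_map m e s (i # w) =
        (\<Sum>eta \<in> words_upto m ?n. lderiv i s eta * shuffle (e i) (phi e eta one_ser) w)"
      using 2 by (simp add: mixed_map_Cons_eq_sum)
    also have "\<dots> = shuffle (e i) (\<lambda>v. \<Sum>eta \<in> words_upto m ?n. lderiv i s eta * phi e eta one_ser v) w"
      by (rule shuffle_sum_right[symmetric])
    also have "\<dots> = shuffle (e i) (mixed_map m e (lderiv i s)) w"
      by (rule shuffle_cong_upto) (simp_all add: mixed_map_eq_sum[of _ ?n])
    finally show ?thesis
      using 2 by simp
  next
    case 3
    then show ?thesis
      by (simp add: mixed_map_Cons_not_letter)
  qed
qed

lemma lderiv_mixed_map:
  "lderiv i (mixed_map m e s) =
     (if i = 0 then mixed_map m e (lderiv 0 s)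
      else if i \<le> m then shuffle (e i) (mixed_map m e (lderiv i s))
      else (\<lambda>_. 0))"
  by (auto simp: lderiv_def mixed_map_Cons)

lemma mixed_map_add: "mixed_map m e (\<lambda>v. a v + b v) = (\<lambda>w. mixed_map m e a w + mixed_map m e b w)"
  by (rule ext) (simp add: mixed_map_eq_sum[OF order_refl] algebra_simps sum.distrib)

lemma mixed_map_zero [simp]: "mixed_map m e (\<lambda>_. 0) = (\<lambda>_. 0)"
  by (simp add: mixed_map_def)

lemma lderiv_one_ser [simp]: "lderiv a one_ser = (\<lambda>_. 0)"
  by (simp add: lderiv_def)

lemma mixed_map_one [simp]: "mixed_map m e one_ser = one_ser"
proof
  show "mixed_map m e one_ser w = one_ser w" for w
    by (cases w) (simp_all add: mixed_map_Cons)
qed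

lemma mixed_map_shuffle_Cons:
  assumes IH: "\<And>a b v. length v \<le> length w \<Longrightarrow>
    mixed_map m e (shuffle a b) v = shuffle (mixed_map m e a) (mixed_map m e b) v"
  shows "mixed_map m e (shuffle a b) (i # w) = shuffle (mixed_map m e a) (mixed_map m e b) (i # w)"
proof -
  consider "i = 0" | "0 < i" "i \<le> m" | "m < i"
    by linarith
  then show ?thesis
  proof cases
    case 1
    then show ?thesis
      by (simp add: mixed_map_Cons lderiv_shuffle mixed_map_add IH shuffle_Cons lderiv_mixed_map)
  next
    case 2
    let ?A = "mixed_map m e a" and ?B = "mixed_map m e b"
    let ?A' = "mixed_map m e (lderiv i a)" and ?B' = "mixed_map m e (lderiv i b)"
    have "mixed_map m e (shuffle a b) (i # w) =
        shuffle (e i)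
          (\<lambda>v. mixed_map m e (shuffle (lderiv i a) b) v + mixed_map m e (shuffle a (lderiv i b)) v) w"
      using 2 by (simp add: mixed_map_Cons lderiv_shuffle mixed_map_add)
    also have "\<dots> = shuffle (e i) (\<lambda>v. shuffle ?A' ?B v + shuffle ?A ?B' v) w"
      by (rule shuffle_cong_upto) (simp_all add: IH)
    also have "\<dots> = shuffle (shuffle (e i) ?A') ?B w + shuffle ?A (shuffle (e i) ?B') w"
      by (simp add: shuffle_add_right shuffle_assoc shuffle_left_commute[of "e i"])
    also have "\<dots> = shuffle ?A ?B (i # w)"
      using 2 by (simp add: shuffle_Cons lderiv_mixed_map)
    finally show ?thesis .
  next
    case 3
    then show ?thesis
      by (simp add: mixed_map_Cons shuffle_Cons lderiv_mixed_map)
  qed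
qed

lemma mixed_map_shuffle: "mixed_map m e (shuffle a b) = shuffle (mixed_map m e a) (mixed_map m e b)"
proof
  show "mixed_map m e (shuffle a b) w = shuffle (mixed_map m e a) (mixed_map m e b) w" for w
  proof (induction "length w" arbitrary: w a b rule: less_induct)
    case less
    then show ?case
      by (cases w) (simp_all add: shuffle_Nil mixed_map_shuffle_Cons)
  qed
qed

lemma mixed_map_shpow: "mixed_map m e (shpow c M) = shpow (\<lambda>j. mixed_map m e (c j)) M"
proof -
  have "mixed_map m e (foldr (\<lambda>j. shuffle (c j)) js one_ser) =
      foldr (\<lambda>j. shuffle (mixed_map m e (c j))) js one_ser" for js
    by (induction js) (simp_all add: mixed_map_shuffle)
  then show ?thesis
    unfolding shpow_def .
qed

lemma vanishes_below_shpow: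
  assumes "\<forall>j \<in># M. c j [] = 0"
  shows "vanishes_below (size M) (shpow c M)"
proof -
  have "vanishes_below (length js) (foldr (\<lambda>j acc. shuffle (c j) acc) js one_ser)"
    if "\<forall>j \<in> set js. c j [] = 0" for js
    using that
    by (induction js) (auto simp: vanishes_below_1[symmetric] intro: vanishes_below_shuffle[of 1, simplified])
  from this[of "sorted_list_of_multiset M"] assms show ?thesis
    unfolding shpow_def by (metis mset_sorted_list_of_multiset set_sorted_list_of_multiset size_mset)
qed

section \<open>Wiener-Fliess composition\<close>

definition monomials_upto :: "nat \<Rightarrow> nat \<Rightarrow> nat multiset set" where
  "monomials_upto q n = {M. set_mset M \<subseteq> {1..q} \<and> size M \<le> n}"

lemma finite_monomials_upto: "finite (monomials_upto q n)"
proof -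
  have "monomials_upto q n = (\<Union>k \<le> n. multisets_of_size {1..q} k)"
    by (auto simp: monomials_upto_def multisets_of_size_def)
  then show ?thesis
    by auto
qed

lemma wf_comp_eq_sum:
  assumes "\<forall>j \<in> {1..q}. c j [] = 0" "length w \<le> n"
  shows "wf_comp q d c k w = (\<Sum>M \<in> monomials_upto q n. d k M * shpow c M w)"
  unfolding wf_comp_def
proof (rule infsum_finite_support[OF finite_monomials_upto])
  show "monomials_upto q n \<subseteq> {M. set_mset M \<subseteq> {1..q}}"
    by (auto simp: monomials_upto_def)
  show "d k M * shpow c M w = 0" if "M \<in> {M. set_mset M \<subseteq> {1..q}} - monomials_upto q n" for M
  proof -
    from that assms have "vanishes_below (size M) (shpow c M)" "length w < size M"
      by (auto simp: monomials_upto_def intro!: vanishes_below_shpow)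
    then show ?thesis
      by (simp add: vanishes_below_def)
  qed
qed

lemma wf_comp_mixed_map:
  assumes proper: "\<forall>j \<in> {1..q}. c j [] = 0"
  shows "wf_comp q d (\<lambda>j. mixed_map m e (c j)) k = mixed_map m e (wf_comp q d c k)"
proof
  fix w
  let ?n = "length w" and ?phi = "\<lambda>eta. phi e eta one_ser w"
  have "wf_comp q d (\<lambda>j. mixed_map m e (c j)) k w =
      (\<Sum>M \<in> monomials_upto q ?n. d k M * shpow (\<lambda>j. mixed_map m e (c j)) M w)"
    using proper by (intro wf_comp_eq_sum) simp_all
  also have "\<dots> = (\<Sum>M \<in> monomials_upto q ?n. \<Sum>eta \<in> words_upto m ?n. d k M * shpow c M eta * ?phi eta)"
    by (simp add: mixed_map_shpow[symmetric] mixed_map_eq_sum[OF order_refl] sum_distrib_left mult.assoc)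
  also have "\<dots> = (\<Sum>eta \<in> words_upto m ?n. (\<Sum>M \<in> monomials_upto q ?n. d k M * shpow c M eta) * ?phi eta)"
    by (subst sum.swap) (simp add: sum_distrib_right)
  also have "\<dots> = (\<Sum>eta \<in> words_upto m ?n. wf_comp q d c k eta * ?phi eta)"
    using proper by (intro sum.cong refl) (simp add: wf_comp_eq_sum[where n = ?n] words_upto_def)
  also have "\<dots> = mixed_map m e (wf_comp q d c k) w"
    by (simp add: mixed_map_eq_sum[OF order_refl])
  finally show "wf_comp q d (\<lambda>j. mixed_map m e (c j)) k w = mixed_map m e (wf_comp q d c k) w" .
qed

theorem theorem13:
  fixes m p q :: nat
    and d :: "nat \<Rightarrow> nat multiset \<Rightarrow> real"
    and c e :: "nat \<Rightarrow> series"
  assumes c_alph: "\<forall>j\<in>{1..q}. \<forall>w. c j w \<noteq> 0 \<longrightarrow> w \<in> lists {0..m}"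
    and e_alph: "\<forall>j\<in>{1..m}. \<forall>w. e j w \<noteq> 0 \<longrightarrow> w \<in> lists {0..m}"
    and c_proper: "\<forall>j\<in>{1..q}. c j [] = 0"
  shows "\<forall>k\<in>{1..p}. wf_comp q d (mixed_comp m c e) k = mixed_comp m (wf_comp q d c) e k"
proof -
  from c_proper show ?thesis
    by (simp add: mixed_comp_eq_mixed_map wf_comp_mixed_map)
qed

end
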